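(* Let ${\bm p}^t\in(0,1)^V$ be a softmax probability vector, $y\in[V]$ a ground-truth class with one-hot ${\bm y}={\bm e}_y$, $y^*=\arg\max_{j\neq y}p_j^t$, ${\bm g}^t={\bm p}^t-{\bm y}$, and ${\bm H}^t_{{\bm z}}=\mathrm{diag}({\bm p}^t)-{\bm p}^t({\bm p}^t)^\top$. Let $S=p^t_y+p^t_{y^*}$, $\tau=1-S$, $\bar p_y=p^t_y/S\in(0,1)$, and $\Delta_{\mathrm{bin}}(\bar p_y)=4\bar p_y(1-\bar p_y)^2$. Then $$\Delta^t_{y^*,y}:=({\bm H}^t_{{\bm z}}{\bm g}^t)_{y^*}-({\bm H}^t_{{\bm z}}{\bm g}^t)_y=\Delta_{\mathrm{bin}}(\bar p_y)+\zeta^t\quad\text{with}\quad |\zeta^t|\le 6\tau.$$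
   Context: ${\bm H}^t_{{\bm z}}$ and ${\bm g}^t$ are the Hessian and gradient in the logits of the softmax cross-entropy loss $-\sum_k y_k\log p_k$ at ${\bm p}^t$. *)

theory Defs
  imports Complex_Main
begin

text \<open>Vectors in R^V are functions nat => real on indices {0..<V}; classes are 0..V-1.\<close>

definition onehot :: "nat \<Rightarrow> nat \<Rightarrow> real" where
  "onehot y = (\<lambda>j. if j = y then 1 else 0)"

definition ce_grad :: "(nat \<Rightarrow> real) \<Rightarrow> nat \<Rightarrow> nat \<Rightarrow> real" where
  "ce_grad p y = (\<lambda>j. p j - onehot y j)"

definition ce_hess :: "(nat \<Rightarrow> real) \<Rightarrow> nat \<Rightarrow> nat \<Rightarrow> real" where
  "ce_hess p = (\<lambda>i j. (if i = j then p i else 0) - p i * p j)"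

definition mat_vec :: "nat \<Rightarrow> (nat \<Rightarrow> nat \<Rightarrow> real) \<Rightarrow> (nat \<Rightarrow> real) \<Rightarrow> nat \<Rightarrow> real" where
  "mat_vec V A v = (\<lambda>i. \<Sum>j<V. A i j * v j)"

definition Delta_bin :: "real \<Rightarrow> real" where
  "Delta_bin q = 4 * q * (1 - q)^2"

end

theory Submission
  imports Defs
begin

text \<open>Write \<open>a = p\<^sub>y\<close>, \<open>b = p\<^sub>y\<^sub>*\<close>, \<open>S = a + b = 1 - \<tau>\<close> and \<open>q = a / S\<close>. Since
  \<open>H g = p \<circ> g - (p \<bullet> g) p\<close> and \<open>p \<bullet> g = \<parallel>p\<parallel>\<^sup>2 - a\<close>, the gap
  \<open>\<Delta> = b\<^sup>2 + a b - 2 a\<^sup>2 + a + (a - b) \<parallel>p\<parallel>\<^sup>2\<close> depends on the remaining classes only through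
  \<open>R = \<parallel>p\<parallel>\<^sup>2 - a\<^sup>2 - b\<^sup>2\<close>, and \<open>0 \<le> R \<le> b \<tau>\<close> because every other \<open>p\<^sub>j\<close> is at most \<open>b\<close>.
  Substituting \<open>a = q S\<close>, \<open>b = (1 - q) S\<close> gives exactly
  \<open>\<Delta> - \<Delta>\<^sub>b\<^sub>i\<^sub>n(q) = (a - b) R - \<tau> h(q, S)\<close> with a polynomial \<open>h\<close> bounded by 5 on the unit
  square, so the error is at most \<open>\<tau> + 5 \<tau>\<close>.\<close>

lemma mat_vec_ce_hess:
  assumes "i < V"
  shows "mat_vec V (ce_hess p) v i = p i * v i - p i * (\<Sum>j<V. p j * v j)"
proof -
  have "mat_vec V (ce_hess p) v i = (\<Sum>j<V. (if i = j then p i * v j else 0) - p i * (p j * v j))"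
    unfolding mat_vec_def ce_hess_def by (intro sum.cong) (auto simp: algebra_simps)
  also have "\<dots> = p i * v i - p i * (\<Sum>j<V. p j * v j)"
    using assms by (simp add: sum_subtractf sum_distrib_left)
  finally show ?thesis .
qed

lemma sum_mult_ce_grad:
  assumes "y < V"
  shows "(\<Sum>j<V. p j * ce_grad p y j) = (\<Sum>j<V. (p j)\<^sup>2) - p y"
proof -
  have "(\<Sum>j<V. p j * ce_grad p y j) = (\<Sum>j<V. (p j)\<^sup>2) - (\<Sum>j<V. if j = y then p j else 0)"
    unfolding sum_subtractf [symmetric] ce_grad_def onehot_def
    by (intro sum.cong) (auto simp: power2_eq_square algebra_simps)
  with assms show ?thesis by simp
qed

lemma ce_hess_grad_diff:
  assumes "y < V" "y' < V" "y' \<noteq> y"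
  shows "mat_vec V (ce_hess p) (ce_grad p y) y' - mat_vec V (ce_hess p) (ce_grad p y) y
    = (p y')\<^sup>2 + p y * p y' - 2 * (p y)\<^sup>2 + p y + (p y - p y') * (\<Sum>j<V. (p j)\<^sup>2)"
proof -
  have grad: "ce_grad p y y = p y - 1" "ce_grad p y y' = p y'"
    using assms(3) by (auto simp: ce_grad_def onehot_def)
  show ?thesis
    unfolding mat_vec_ce_hess [OF assms(1)] mat_vec_ce_hess [OF assms(2)]
      sum_mult_ce_grad [OF assms(1)] grad
    by (simp add: power2_eq_square algebra_simps)
qed

lemma sum_power2_le_bound_mult_sum:
  fixes f :: "'a \<Rightarrow> real"
  assumes "\<And>j. j \<in> A \<Longrightarrow> 0 \<le> f j \<and> f j \<le> M"
  shows "(\<Sum>j\<in>A. (f j)\<^sup>2) \<le> M * sum f A"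
  unfolding sum_distrib_left
  by (rule sum_mono) (use assms in \<open>auto simp: power2_eq_square intro: mult_right_mono\<close>)

lemma sum_power2_top_two_bounds:
  fixes p :: "nat \<Rightarrow> real"
  assumes p_nonneg: "\<forall>j<V. 0 \<le> p j" and p_sum: "(\<Sum>j<V. p j) = 1"
    and "y < V" "y' < V" "y' \<noteq> y"
    and y'_max: "\<forall>j<V. j \<noteq> y \<longrightarrow> p j \<le> p y'"
  shows "(p y)\<^sup>2 + (p y')\<^sup>2 \<le> (\<Sum>j<V. (p j)\<^sup>2)"
    and "(\<Sum>j<V. (p j)\<^sup>2) \<le> (p y)\<^sup>2 + (p y')\<^sup>2 + p y' * (1 - (p y + p y'))"
proof -
  define rest where "rest = {..<V} - {y, y'}"
  have split: "(\<Sum>j<V. f j) = f y + f y' + sum f rest" for f :: "nat \<Rightarrow> real"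
  proof -
    have "finite rest" "{..<V} = insert y (insert y' rest)" "y \<notin> insert y' rest" "y' \<notin> rest"
      using assms(3-5) by (auto simp: rest_def)
    then show ?thesis by (simp add: add.assoc)
  qed
  have rest_range: "0 \<le> p j \<and> p j \<le> p y'" if "j \<in> rest" for j
    using that p_nonneg y'_max by (auto simp: rest_def)
  have "0 \<le> (\<Sum>j\<in>rest. (p j)\<^sup>2)" by (simp add: sum_nonneg)
  then show "(p y)\<^sup>2 + (p y')\<^sup>2 \<le> (\<Sum>j<V. (p j)\<^sup>2)"
    by (simp add: split [of "\<lambda>j. (p j)\<^sup>2"])
  have "sum p rest = 1 - (p y + p y')" using split [of p] p_sum by simp
  with sum_power2_le_bound_mult_sum [of rest p "p y'"] rest_range
  show "(\<Sum>j<V. (p j)\<^sup>2) \<le> (p y)\<^sup>2 + (p y')\<^sup>2 + p y' * (1 - (p y + p y'))"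
    by (simp add: split [of "\<lambda>j. (p j)\<^sup>2"])
qed

lemma abs_Delta_bin_le_one:
  assumes "0 \<le> q" "q \<le> 1"
  shows "\<bar>Delta_bin q\<bar> \<le> 1"
proof -
  have "4 * q * (1 - q) = 1 - (2 * q - 1)\<^sup>2" by (simp add: power2_eq_square algebra_simps)
  moreover have "(2 * q - 1)\<^sup>2 \<le> 1" using assms by (simp add: abs_square_le_1)
  ultimately have "0 \<le> 4 * q * (1 - q)" "4 * q * (1 - q) \<le> 1"
    using assms by auto
  moreover have "Delta_bin q = 4 * q * (1 - q) * (1 - q)"
    by (simp add: Delta_bin_def power2_eq_square)
  ultimately show ?thesis using assms by (simp add: mult_le_one)
qed

lemma Delta_bin_remainder_bound:
  fixes q S :: real
  assumes q: "0 \<le> q" "q \<le> 1" and S: "0 \<le> S" "S \<le> 1"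
  shows "\<bar>Delta_bin q + S * (q * (2*q - 1) * (2*q - 3))
          + S\<^sup>2 * ((2*q - 1) * (2*q\<^sup>2 - 2*q + 1))\<bar> \<le> 5"
proof -
  have lin: "\<bar>2*q - 1\<bar> \<le> 1" "\<bar>2*q - 3\<bar> \<le> 3" "\<bar>q\<bar> \<le> 1" using q by auto
  have "2*q\<^sup>2 - 2*q + 1 = q\<^sup>2 + (1 - q)\<^sup>2" by (simp add: power2_eq_square algebra_simps)
  then have "0 \<le> 2*q\<^sup>2 - 2*q + 1" by (metis add_nonneg_nonneg zero_le_power2)
  moreover have "q\<^sup>2 \<le> q" using q by (simp add: power2_eq_square mult_left_le)
  ultimately have quad: "\<bar>2*q\<^sup>2 - 2*q + 1\<bar> \<le> 1" by simp
  have "\<bar>q * (2*q - 1) * (2*q - 3)\<bar> \<le> 1 * 1 * 3"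
    unfolding abs_mult using lin by (intro mult_mono) auto
  moreover have "\<bar>S * (q * (2*q - 1) * (2*q - 3))\<bar> \<le> \<bar>q * (2*q - 1) * (2*q - 3)\<bar>"
    unfolding abs_mult [of S] using S by (intro mult_left_le_one_le) auto
  ultimately have linear_term: "\<bar>S * (q * (2*q - 1) * (2*q - 3))\<bar> \<le> 3" by simp
  have "\<bar>(2*q - 1) * (2*q\<^sup>2 - 2*q + 1)\<bar> \<le> 1 * 1"
    unfolding abs_mult using lin quad by (intro mult_mono) auto
  moreover have "\<bar>S\<^sup>2 * ((2*q - 1) * (2*q\<^sup>2 - 2*q + 1))\<bar> \<le> \<bar>(2*q - 1) * (2*q\<^sup>2 - 2*q + 1)\<bar>"
    unfolding abs_mult [of "S\<^sup>2"] using S by (intro mult_left_le_one_le) (auto simp: power_le_one)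
  ultimately have quadratic_term: "\<bar>S\<^sup>2 * ((2*q - 1) * (2*q\<^sup>2 - 2*q + 1))\<bar> \<le> 1" by simp
  have "\<bar>Delta_bin q + S * (q * (2*q - 1) * (2*q - 3))
          + S\<^sup>2 * ((2*q - 1) * (2*q\<^sup>2 - 2*q + 1))\<bar>
      \<le> \<bar>Delta_bin q\<bar> + \<bar>S * (q * (2*q - 1) * (2*q - 3))\<bar>
          + \<bar>S\<^sup>2 * ((2*q - 1) * (2*q\<^sup>2 - 2*q + 1))\<bar>"
    by (rule order_trans [OF abs_triangle_ineq add_right_mono [OF abs_triangle_ineq]])
  also have "\<dots> \<le> 1 + 3 + 1"
    using abs_Delta_bin_le_one [OF q] linear_term quadratic_term by (intro add_mono)
  finally show ?thesis by simp
qed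

lemma gap_approx_Delta_bin:
  fixes a b Q :: real
  assumes a: "0 < a" and b: "0 < b" and ab: "a + b \<le> 1"
    and Q_ge: "a\<^sup>2 + b\<^sup>2 \<le> Q" and Q_le: "Q \<le> a\<^sup>2 + b\<^sup>2 + b * (1 - (a + b))"
  shows "\<bar>b\<^sup>2 + a * b - 2 * a\<^sup>2 + a + (a - b) * Q - Delta_bin (a / (a + b))\<bar>
    \<le> 6 * (1 - (a + b))"
proof -
  define S where "S = a + b"
  define q where "q = a / S"
  define R where "R = Q - a\<^sup>2 - b\<^sup>2"
  define h where "h = Delta_bin q + S * (q * (2*q - 1) * (2*q - 3))
                        + S\<^sup>2 * ((2*q - 1) * (2*q\<^sup>2 - 2*q + 1))"
  have S: "0 < S" "S \<le> 1" using a b ab by (auto simp: S_def)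
  have q: "0 \<le> q" "q \<le> 1" using a b by (auto simp: q_def S_def)
  have a_eq: "a = q * S" and b_eq: "b = (1 - q) * S"
    using S by (auto simp: q_def S_def field_simps)
  have gap_eq: "b\<^sup>2 + a * b - 2 * a\<^sup>2 + a + (a - b) * Q - Delta_bin q = (a - b) * R - (1 - S) * h"
    unfolding R_def h_def Delta_bin_def a_eq b_eq by algebra
  have R_bound: "\<bar>(a - b) * R\<bar> \<le> 1 - S"
  proof -
    have "\<bar>(a - b) * R\<bar> \<le> R" using a b ab Q_ge by (simp add: abs_mult R_def mult_left_le_one_le)
    also have "\<dots> \<le> b * (1 - S)" using Q_le by (simp add: R_def S_def)
    also have "\<dots> \<le> 1 - S" using a b S by (intro mult_left_le_one_le) (auto simp: S_def)
    finally show ?thesis .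
  qed
  have h_bound: "\<bar>(1 - S) * h\<bar> \<le> (1 - S) * 5"
  proof -
    have "\<bar>h\<bar> \<le> 5" unfolding h_def using S by (intro Delta_bin_remainder_bound q) auto
    then have "(1 - S) * \<bar>h\<bar> \<le> (1 - S) * 5" using S by (intro mult_left_mono) auto
    then show ?thesis using S by (simp add: abs_mult)
  qed
  have "\<bar>(a - b) * R - (1 - S) * h\<bar> \<le> \<bar>(a - b) * R\<bar> + \<bar>(1 - S) * h\<bar>"
    by (rule abs_triangle_ineq4)
  also have "\<dots> \<le> (1 - S) + (1 - S) * 5" using R_bound h_bound by (rule add_mono)
  also have "\<dots> = 6 * (1 - S)" by simp
  finally show ?thesis unfolding S_def [symmetric] q_def [symmetric] gap_eq .
qed

theorem lemma3:
  fixes V :: nat and p :: "nat \<Rightarrow> real" and y ystar :: nat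
  assumes p_range: "\<forall>j<V. 0 < p j \<and> p j < 1"
    and p_sum: "(\<Sum>j<V. p j) = 1"
    and y_lt: "y < V"
    and ystar_lt: "ystar < V" and ystar_ne: "ystar \<noteq> y"
    and ystar_max: "\<forall>j<V. j \<noteq> y \<longrightarrow> p j \<le> p ystar"
  shows "\<exists>\<zeta>::real.
     mat_vec V (ce_hess p) (ce_grad p y) ystar - mat_vec V (ce_hess p) (ce_grad p y) y
       = Delta_bin (p y / (p y + p ystar)) + \<zeta>
     \<and> \<bar>\<zeta>\<bar> \<le> 6 * (1 - (p y + p ystar))"
proof -
  have p_nonneg: "\<forall>j<V. 0 \<le> p j" using p_range by auto
  have "p y + p ystar = sum p {y, ystar}" using ystar_ne by simp
  also have "\<dots> \<le> 1"
    unfolding p_sum [symmetric] using p_nonneg y_lt ystar_lt by (intro sum_mono2) auto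
  finally have "p y + p ystar \<le> 1" .
  moreover note sum_power2_top_two_bounds [OF p_nonneg p_sum y_lt ystar_lt ystar_ne ystar_max]
  ultimately have "\<bar>(mat_vec V (ce_hess p) (ce_grad p y) ystar - mat_vec V (ce_hess p) (ce_grad p y) y)
      - Delta_bin (p y / (p y + p ystar))\<bar> \<le> 6 * (1 - (p y + p ystar))"
    unfolding ce_hess_grad_diff [OF y_lt ystar_lt ystar_ne]
    using p_range y_lt ystar_lt by (intro gap_approx_Delta_bin) auto
  then show ?thesis by (intro exI [of _ "_ - Delta_bin (p y / (p y + p ystar))"]) auto
qed

end
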